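(* Let $R=K[x_1,\ldots,x_n]$ be a polynomial ring over a field $K$ with its $\mathbb{N}^n$-grading, and let $M$ be a nonzero squarefree $R$-module. If $M_0=0$ (the component of degree $0\in\mathbb{N}^n$), then $\operatorname{depth} M>0$.
   Context: An $\mathbb{N}^n$-graded $R$-module $M$ (with $\deg x_j=e_j$, the $j$-th unit vector) is squarefree if, for all $\alpha=(\alpha_1,\ldots,\alpha_n)\in\mathbb{N}^n$ and all $j$, multiplication by $x_j$ from $M_\alpha$ to $M_{\alpha+e_j}$ is bijective whenever $\alpha_j\neq 0$. Depth is taken with respect to $\mathfrak{m}=(x_1,\ldots,x_n)$. *)

theory Defs
  imports Complex_Main
begin

(* Multidegrees alpha in N^n are functions nat => nat vanishing outside {0..<n};
   the j-th unit vector e_j (0-based, j < n). *)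
definition unitv :: "nat \<Rightarrow> nat \<Rightarrow> nat" where
  "unitv j = (\<lambda>i. if i = j then 1 else 0)"

definition in_Nn :: "nat \<Rightarrow> (nat \<Rightarrow> nat) \<Rightarrow> bool" where
  "in_Nn n \<alpha> \<longleftrightarrow> (\<forall>i\<ge>n. \<alpha> i = 0)"

(* An N^n-graded module over R = K[x_1,...,x_n]:
   - the underlying group 'm is a K-vector space via smul;
   - X j is the action of the variable x_(j+1) (0-based index j < n); these are
     K-linear and pairwise commuting, which is exactly an R-module structure;
   - Mc alpha is the graded component M_alpha (a K-subspace), zero for alpha not in N^n;
   - x_j maps M_alpha into M_(alpha + e_j);
   - M is the internal direct sum of the M_alpha. *)
definition graded_module ::
  "nat \<Rightarrow> ('k::field \<Rightarrow> 'm::ab_group_add \<Rightarrow> 'm) \<Rightarrow> (nat \<Rightarrow> 'm \<Rightarrow> 'm)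
     \<Rightarrow> ((nat \<Rightarrow> nat) \<Rightarrow> 'm set) \<Rightarrow> bool" where
  "graded_module n smul X Mc \<longleftrightarrow>
     vector_space smul
   \<and> (\<forall>j<n. Vector_Spaces.linear smul smul (X j))
   \<and> (\<forall>i<n. \<forall>j<n. \<forall>u. X i (X j u) = X j (X i u))
   \<and> (\<forall>\<alpha>. module.subspace smul (Mc \<alpha>))
   \<and> (\<forall>\<alpha>. \<not> in_Nn n \<alpha> \<longrightarrow> Mc \<alpha> = {0})
   \<and> (\<forall>\<alpha> j u. j < n \<longrightarrow> u \<in> Mc \<alpha> \<longrightarrow> X j u \<in> Mc (\<lambda>i. \<alpha> i + unitv j i))
   \<and> (\<forall>u. \<exists>!c. finite {\<alpha>. c \<alpha> \<noteq> 0} \<and> (\<forall>\<alpha>. c \<alpha> \<in> Mc \<alpha>)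
              \<and> u = sum c {\<alpha>. c \<alpha> \<noteq> 0})"

definition squarefree_module ::
  "nat \<Rightarrow> (nat \<Rightarrow> 'm::ab_group_add \<Rightarrow> 'm) \<Rightarrow> ((nat \<Rightarrow> nat) \<Rightarrow> 'm set) \<Rightarrow> bool" where
  "squarefree_module n X Mc \<longleftrightarrow>
     (\<forall>\<alpha> j. in_Nn n \<alpha> \<longrightarrow> j < n \<longrightarrow> \<alpha> j \<noteq> 0 \<longrightarrow>
        bij_betw (X j) (Mc \<alpha>) (Mc (\<lambda>i. \<alpha> i + unitv j i)))"

(* depth M > 0 w.r.t. m = (x_1,...,x_n), in the Ext-characterisation
   depth M = min{i. Ext^i_R(K,M) \<noteq> 0}: depth M > 0 iff Hom_R(R/m, M) = 0,
   i.e. no nonzero element of M is annihilated by all variables. *)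
definition depth_pos :: "nat \<Rightarrow> (nat \<Rightarrow> 'm::ab_group_add \<Rightarrow> 'm) \<Rightarrow> bool" where
  "depth_pos n X \<longleftrightarrow> (\<forall>u. (\<forall>j<n. X j u = 0) \<longrightarrow> u = 0)"

end

theory Submission
  imports Defs
begin

(* Decompose an element u of the socle into homogeneous components. Each variable x_j
   shifts degrees injectively, so by uniqueness of the decomposition x_j kills every
   component of u. A nonzero component of degree alpha has alpha \<noteq> 0 because M_0 = 0,
   so some alpha_j \<noteq> 0, and then x_j is injective on M_alpha by squarefreeness. *)

definition homogeneous_decomposition ::
  "('a \<Rightarrow> 'm::comm_monoid_add set) \<Rightarrow> 'm \<Rightarrow> ('a \<Rightarrow> 'm) \<Rightarrow> bool" where
  "homogeneous_decomposition Mc u c \<longleftrightarrow>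
     finite {\<alpha>. c \<alpha> \<noteq> 0} \<and> (\<forall>\<alpha>. c \<alpha> \<in> Mc \<alpha>) \<and> u = sum c {\<alpha>. c \<alpha> \<noteq> 0}"

lemma homogeneous_decomposition_zero:
  assumes "\<And>\<alpha>. 0 \<in> Mc \<alpha>"
  shows "homogeneous_decomposition Mc 0 (\<lambda>_. 0)"
  using assms by (simp add: homogeneous_decomposition_def)

lemma homogeneous_decomposition_of_zero:
  assumes "\<forall>u. \<exists>!c. homogeneous_decomposition Mc u c"
    and "\<And>\<alpha>. 0 \<in> Mc \<alpha>"
    and "homogeneous_decomposition Mc 0 d"
  shows "d = (\<lambda>_. 0)"
  using assms homogeneous_decomposition_zero by metis

lemma homogeneous_decomposition_image:
  assumes dec: "homogeneous_decomposition Mc u c"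
    and f: "additive f"
    and sh: "inj sh"
    and maps: "\<And>\<alpha> v. v \<in> Mc \<alpha> \<Longrightarrow> f v \<in> Mc (sh \<alpha>)"
    and zero_mem: "\<And>\<beta>. 0 \<in> Mc \<beta>"
  shows "homogeneous_decomposition Mc (f u) (\<lambda>\<beta>. if \<beta> \<in> range sh then f (c (inv sh \<beta>)) else 0)"
    (is "homogeneous_decomposition Mc _ ?d")
proof -
  define S where "S = {\<alpha>. c \<alpha> \<noteq> 0}"
  have S: "finite S" "\<forall>\<alpha>. c \<alpha> \<in> Mc \<alpha>" "u = sum c S"
    using dec by (simp_all add: homogeneous_decomposition_def S_def)
  have d_sh: "?d (sh \<alpha>) = f (c \<alpha>)" for \<alpha>
    using sh by simp
  have supp: "{\<beta>. ?d \<beta> \<noteq> 0} \<subseteq> sh ` S"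
    using additive.zero[OF f] sh by (auto simp: S_def split: if_splits)
  have "sum ?d {\<beta>. ?d \<beta> \<noteq> 0} = sum ?d (sh ` S)"
    using supp S(1) by (intro sum.mono_neutral_left) auto
  also have "\<dots> = (\<Sum>\<alpha>\<in>S. f (c \<alpha>))"
    using sh by (simp add: sum.reindex inj_on_def inj_def)
  also have "\<dots> = f u"
    using S(3) additive.sum[OF f] by metis
  finally have "f u = sum ?d {\<beta>. ?d \<beta> \<noteq> 0}" ..
  moreover have "finite {\<beta>. ?d \<beta> \<noteq> 0}"
    using supp S(1) finite_subset by blast
  moreover have "?d \<beta> \<in> Mc \<beta>" for \<beta>
    using maps S(2) zero_mem sh by (auto simp: inv_f_f)
  ultimately show ?thesis
    by (simp add: homogeneous_decomposition_def)
qed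

lemma homogeneous_component_annihilated:
  assumes unique: "\<forall>u. \<exists>!c. homogeneous_decomposition Mc u c"
    and zero_mem: "\<And>\<beta>. 0 \<in> Mc \<beta>"
    and dec: "homogeneous_decomposition Mc u c"
    and f: "additive f"
    and sh: "inj sh"
    and maps: "\<And>\<alpha> v. v \<in> Mc \<alpha> \<Longrightarrow> f v \<in> Mc (sh \<alpha>)"
    and "f u = 0"
  shows "f (c \<alpha>) = 0"
proof -
  have "(\<lambda>\<beta>. if \<beta> \<in> range sh then f (c (inv sh \<beta>)) else 0) = (\<lambda>_. 0)"
    using homogeneous_decomposition_image[OF dec f sh maps zero_mem] \<open>f u = 0\<close>
    by (intro homogeneous_decomposition_of_zero[OF unique zero_mem]) simp
  then show ?thesis
    using sh by (metis inv_f_f rangeI)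
qed

lemma inj_add_unitv: "inj (\<lambda>\<alpha> i. \<alpha> i + unitv j i)"
  by (rule injI) (simp add: fun_eq_iff)

lemma graded_module_additive:
  assumes "graded_module n smul X Mc" "j < n"
  shows "additive (X j)"
proof -
  have "module_hom smul smul (X j)"
    using assms by (simp add: graded_module_def module_hom_iff_linear)
  then show ?thesis
    by (simp add: additive.intro module_hom.add)
qed

lemma graded_module_zero_mem:
  assumes "graded_module n smul X Mc"
  shows "0 \<in> Mc \<alpha>"
proof -
  have "vector_space smul" "module.subspace smul (Mc \<alpha>)"
    using assms by (simp_all add: graded_module_def)
  then show ?thesis
    by (metis module.subspace_0 module_iff_vector_space)
qed

lemma graded_module_unique_decomposition:
  assumes "graded_module n smul X Mc"
  shows "\<forall>u. \<exists>!c. homogeneous_decomposition Mc u c"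
  using assms by (simp add: graded_module_def homogeneous_decomposition_def)

lemma graded_module_shift:
  assumes "graded_module n smul X Mc" "j < n" "v \<in> Mc \<alpha>"
  shows "X j v \<in> Mc (\<lambda>i. \<alpha> i + unitv j i)"
  using assms by (simp add: graded_module_def)

lemma graded_module_outside:
  assumes "graded_module n smul X Mc" "\<not> in_Nn n \<alpha>"
  shows "Mc \<alpha> = {0}"
  using assms by (simp add: graded_module_def)

lemma graded_module_component_annihilated:
  assumes G: "graded_module n smul X Mc"
    and dec: "homogeneous_decomposition Mc u c"
    and "j < n" "X j u = 0"
  shows "X j (c \<alpha>) = 0"
  using homogeneous_component_annihilated[where sh = "\<lambda>\<alpha> i. \<alpha> i + unitv j i",
      OF graded_module_unique_decomposition[OF G] graded_module_zero_mem[OF G] dec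
      graded_module_additive[OF G \<open>j < n\<close>] inj_add_unitv graded_module_shift[OF G \<open>j < n\<close>]]
    \<open>X j u = 0\<close>
  by simp

lemma squarefree_annihilated_component:
  assumes sqf: "squarefree_module n X Mc"
    and "in_Nn n \<alpha>" "\<alpha> \<noteq> (\<lambda>_. 0)"
    and "v \<in> Mc \<alpha>" "0 \<in> Mc \<alpha>"
    and ann: "\<forall>j<n. X j v = 0" and ann0: "\<forall>j<n. X j 0 = 0"
  shows "v = 0"
proof -
  obtain j where "\<alpha> j \<noteq> 0"
    using \<open>\<alpha> \<noteq> (\<lambda>_. 0)\<close> by auto
  moreover from this have "j < n"
    using \<open>in_Nn n \<alpha>\<close> unfolding in_Nn_def by (meson not_le)
  ultimately have "inj_on (X j) (Mc \<alpha>)"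
    using sqf \<open>in_Nn n \<alpha>\<close> unfolding squarefree_module_def bij_betw_def by blast
  then show ?thesis
    using \<open>j < n\<close> ann ann0 \<open>v \<in> Mc \<alpha>\<close> \<open>0 \<in> Mc \<alpha>\<close> by (metis inj_onD)
qed

theorem lemma3p1:
  fixes n :: nat
    and smul :: "'k::field \<Rightarrow> 'm::ab_group_add \<Rightarrow> 'm"
    and X :: "nat \<Rightarrow> 'm \<Rightarrow> 'm"
    and Mc :: "(nat \<Rightarrow> nat) \<Rightarrow> 'm set"
  assumes "graded_module n smul X Mc"
    and "squarefree_module n X Mc"
    and "\<exists>u::'m. u \<noteq> 0"
    and "Mc (\<lambda>_. 0) = {0}"
  shows "depth_pos n X"
  unfolding depth_pos_def
proof (intro allI impI)
  fix u assume ann: "\<forall>j<n. X j u = 0"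
  obtain c where dec: "homogeneous_decomposition Mc u c"
    using graded_module_unique_decomposition[OF assms(1)] by blast
  have comp_ann: "\<forall>j<n. X j (c \<alpha>) = 0" for \<alpha>
    using graded_module_component_annihilated[OF assms(1) dec] ann by blast
  have dec_mem: "c \<alpha> \<in> Mc \<alpha>" for \<alpha>
    using dec by (simp add: homogeneous_decomposition_def)
  have "c \<alpha> = 0" for \<alpha>
  proof (cases "in_Nn n \<alpha> \<and> \<alpha> \<noteq> (\<lambda>_. 0)")
    case True
    have "\<forall>j<n. X j 0 = 0"
      using additive.zero graded_module_additive[OF assms(1)] by blast
    with True show ?thesis
      using squarefree_annihilated_component[OF assms(2) _ _ dec_mem
          graded_module_zero_mem[OF assms(1)] comp_ann]
      by blast
  next
    case False
    then have "Mc \<alpha> = {0}"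
      using graded_module_outside[OF assms(1)] assms(4) by blast
    then show ?thesis
      using dec_mem[of \<alpha>] by simp
  qed
  then show "u = 0"
    using dec by (simp add: homogeneous_decomposition_def)
qed

end
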